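(* Let $\Bbbk$ be a field, let $\mathrm{Var}$ be a variety of $\Bbbk$-algebras with one binary product defined by a set of polylinear identities, and let $\text{tri-}\mathrm{Var}$ be the corresponding replicated variety of tri-algebras. Let $X$ be a set, $\dot X=\{\dot x\mid x\in X\}$ a disjoint copy of $X$, $F=\mathrm{Var}\langle X\cup\dot X\rangle$ the free algebra of $\mathrm{Var}$ on $X\cup\dot X$, and $\varphi:F\to F$ the unique algebra homomorphism with $\varphi(x)=x$, $\varphi(\dot x)=x$ for $x\in X$. Define on the space $F$ three binary operations $$f\vdash g=\varphi(f)g,\qquad f\dashv g=f\varphi(g),\qquad f\perp g=fg\qquad (f,g\in F),$$ and denote the resulting system by $F^{(3)}$. Then $F^{(3)}$ belongs to $\text{tri-}\mathrm{Var}$.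
   Context: Tri-algebras: linear spaces with three bilinear operations $\dashv$ (=$\mu_{\{1\}}$), $\vdash$ (=$\mu_{\{2\}}$), $\perp$ (=$\mu_{\{1,2\}}$), obtained by replicating the product $\mu$ of $\mathrm{Var}$ (writing $\mu_H$ for $H\subseteq\{1,2\}$ nonempty). For a polylinear element $\Phi(x_1,\dots,x_n)$ of the free (magmatic) algebra in one binary operation and a nonempty $H\subseteq\{1,\dots,n\}$, $\Phi_H$ is obtained as follows: view each monomial of $\Phi$ as a binary rooted tree with leaves labelled $x_1,\dots,x_n$ and internal nodes labelled $\mu$; mark the leaves $x_i$, $i\in H$; at each node let $S\subseteq\{1,2\}$ be the set of its branches (left=1, right=2) whose subtrees contain a marked leaf, and replace $\mu$ by $\mu_S$ if $S\neq\varnothing$, by $\mu_{\{1\}}$ if $S=\varnothing$. The variety $\text{tri-}\mathrm{Var}$ consists of all tri-algebras satisfying (i) $(a* b)\vdash c=(a\star b)\vdash c$ and $a\dashv(b* c)=a\dashv(b\star c)$ for all $*,\star\in\{\vdash,\dashv,\perp\}$, and (ii) $\Phi_H=0$ for every defining polylinear identity $\Phi$ of $\mathrm{Var}$ of degree $n$ and every nonempty $H\subseteq\{1,\dots,n\}$. *)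

theory Defs
  imports "HOL-Library.Poly_Mapping" "HOL-Library.Multiset"
begin

text \<open>Binary rooted trees with leaves labelled in 'v (= nonassociative monomials).\<close>
datatype 'v mtree = Leaf 'v | Node "'v mtree" "'v mtree"

fun leaves :: "'v mtree \<Rightarrow> 'v list" where
  "leaves (Leaf v) = [v]"
| "leaves (Node a b) = leaves a @ leaves b"

text \<open>Elements of the free magmatic k-algebra on 'v: finitely supported
  linear combinations of monomials.\<close>
type_synonym ('k, 'v) mag = "'v mtree \<Rightarrow>\<^sub>0 'k"

definition msmult :: "'k::field \<Rightarrow> ('k, 'v) mag \<Rightarrow> ('k, 'v) mag" where
  "msmult c p = Poly_Mapping.map (\<lambda>a. c * a) p"

definition mgen :: "'v \<Rightarrow> ('k::field, 'v) mag" where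
  "mgen v = Poly_Mapping.single (Leaf v) 1"

definition mmul :: "('k::field, 'v) mag \<Rightarrow> ('k, 'v) mag \<Rightarrow> ('k, 'v) mag" where
  "mmul p q = (\<Sum>s\<in>Poly_Mapping.keys p. \<Sum>t\<in>Poly_Mapping.keys q.
      Poly_Mapping.single (Node s t) (Poly_Mapping.lookup p s * Poly_Mapping.lookup q t))"

fun eval_mtree :: "'w mtree \<Rightarrow> ('w \<Rightarrow> ('k::field, 'v) mag) \<Rightarrow> ('k, 'v) mag" where
  "eval_mtree (Leaf i) m = m i"
| "eval_mtree (Node a b) m = mmul (eval_mtree a m) (eval_mtree b m)"

definition eval_mag :: "('k::field, 'w) mag \<Rightarrow> ('w \<Rightarrow> ('k, 'v) mag) \<Rightarrow> ('k, 'v) mag" where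
  "eval_mag \<Phi> m = (\<Sum>t\<in>Poly_Mapping.keys \<Phi>. msmult (Poly_Mapping.lookup \<Phi> t) (eval_mtree t m))"

definition polylinear :: "nat \<Rightarrow> ('k::zero, nat) mag \<Rightarrow> bool" where
  "polylinear n \<Phi> \<longleftrightarrow> (\<forall>t\<in>Poly_Mapping.keys \<Phi>. mset (leaves t) = mset [1..<n+1])"

text \<open>Var is given by a set S of defining polylinear identities (n, Phi) (Phi of
  degree n). The free algebra Var<V> is the quotient of the free magmatic algebra on V
  by the verbal ideal: the ideal generated by all values of the identities.\<close>
inductive_set verbal_ideal :: "(nat \<times> ('k::field, nat) mag) set \<Rightarrow> ('k, 'v) mag set"
  for S :: "(nat \<times> ('k::field, nat) mag) set" where
  gen: "(n, \<Phi>) \<in> S \<Longrightarrow> eval_mag \<Phi> m \<in> verbal_ideal S"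
| zero: "0 \<in> verbal_ideal S"
| add: "p \<in> verbal_ideal S \<Longrightarrow> q \<in> verbal_ideal S \<Longrightarrow> p + q \<in> verbal_ideal S"
| smult: "p \<in> verbal_ideal S \<Longrightarrow> msmult c p \<in> verbal_ideal S"
| mulL: "p \<in> verbal_ideal S \<Longrightarrow> mmul q p \<in> verbal_ideal S"
| mulR: "p \<in> verbal_ideal S \<Longrightarrow> mmul p q \<in> verbal_ideal S"

text \<open>Equality in F = Var<V>, expressed on representatives.\<close>
definition free_eq :: "(nat \<times> ('k::field, nat) mag) set \<Rightarrow> ('k, 'v) mag \<Rightarrow> ('k, 'v) mag \<Rightarrow> bool" where
  "free_eq S f g \<longleftrightarrow> f - g \<in> verbal_ideal S"

text \<open>Generators X \<union> Xdot are encoded as 'x + 'x: Inl x = x, Inr x = xdot.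
  phi is the homomorphism with x \<mapsto> x, xdot \<mapsto> x (on representatives; it
  descends to F).\<close>
definition dephi :: "('k::field, 'x + 'x) mag \<Rightarrow> ('k, 'x + 'x) mag" where
  "dephi p = eval_mag p (\<lambda>v. mgen (Inl (case_sum id id v)))"

text \<open>Lt = dashv (mu_{1}), Rt = vdash (mu_{2}), Pp = perp (mu_{1,2}).\<close>
datatype triop = Lt | Rt | Pp

datatype 'v ttree = TLeaf 'v | TNode triop "'v ttree" "'v ttree"

type_synonym ('k, 'v) tripoly = "'v ttree \<Rightarrow>\<^sub>0 'k"

definition marked :: "nat set \<Rightarrow> nat mtree \<Rightarrow> bool" where
  "marked H t \<longleftrightarrow> set (leaves t) \<inter> H \<noteq> {}"

fun lab :: "bool \<Rightarrow> bool \<Rightarrow> triop" where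
  "lab True False = Lt"
| "lab False True = Rt"
| "lab True True = Pp"
| "lab False False = Lt"

fun rep :: "nat set \<Rightarrow> nat mtree \<Rightarrow> nat ttree" where
  "rep H (Leaf i) = TLeaf i"
| "rep H (Node a b) = TNode (lab (marked H a) (marked H b)) (rep H a) (rep H b)"

definition replicate_poly :: "nat set \<Rightarrow> ('k::field, nat) mag \<Rightarrow> ('k, nat) tripoly" where
  "replicate_poly H \<Phi> = (\<Sum>t\<in>Poly_Mapping.keys \<Phi>. Poly_Mapping.single (rep H t) (Poly_Mapping.lookup \<Phi> t))"

fun eval_ttree :: "(triop \<Rightarrow> 'a \<Rightarrow> 'a \<Rightarrow> 'a) \<Rightarrow> 'w ttree \<Rightarrow> ('w \<Rightarrow> 'a) \<Rightarrow> 'a" where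
  "eval_ttree opf (TLeaf i) m = m i"
| "eval_ttree opf (TNode op a b) m = opf op (eval_ttree opf a m) (eval_ttree opf b m)"

definition eval_tri :: "(triop \<Rightarrow> ('k::field, 'v) mag \<Rightarrow> ('k, 'v) mag \<Rightarrow> ('k, 'v) mag)
    \<Rightarrow> ('k, nat) tripoly \<Rightarrow> (nat \<Rightarrow> ('k, 'v) mag) \<Rightarrow> ('k, 'v) mag" where
  "eval_tri opf \<Psi> m = (\<Sum>t\<in>Poly_Mapping.keys \<Psi>. msmult (Poly_Mapping.lookup \<Psi> t) (eval_ttree opf t m))"

text \<open>The tri-algebra (with carrier the quotient of the magmatic algebra on 'v by
  the relation eq, operations given on representatives by opf) belongs to tri-Var.\<close>
definition in_triVar ::
  "(nat \<times> ('k::field, nat) mag) set \<Rightarrow> (('k, 'v) mag \<Rightarrow> ('k, 'v) mag \<Rightarrow> bool)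
   \<Rightarrow> (triop \<Rightarrow> ('k, 'v) mag \<Rightarrow> ('k, 'v) mag \<Rightarrow> ('k, 'v) mag) \<Rightarrow> bool" where
  "in_triVar S eq opf \<longleftrightarrow>
     (\<forall>a b c o1 o2.
        eq (opf Rt (opf o1 a b) c) (opf Rt (opf o2 a b) c) \<and>
        eq (opf Lt a (opf o1 b c)) (opf Lt a (opf o2 b c))) \<and>
     (\<forall>(n, \<Phi>)\<in>S. \<forall>H. H \<noteq> {} \<longrightarrow> H \<subseteq> {1..n} \<longrightarrow>
        (\<forall>m. eq (eval_tri opf (replicate_poly H \<Phi>) m) 0))"

fun F3_op :: "triop \<Rightarrow> ('k::field, 'x + 'x) mag \<Rightarrow> ('k, 'x + 'x) mag \<Rightarrow> ('k, 'x + 'x) mag" where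
  "F3_op Lt f g = mmul f (dephi g)"
| "F3_op Rt f g = mmul (dephi f) g"
| "F3_op Pp f g = mmul f g"

end

theory Submission
  imports Defs
begin

text \<open>
  The substitution \<open>\<phi>\<close> (\<open>x, \<dot>x \<mapsto> x\<close>) is an idempotent endomorphism of the free
  magmatic algebra, and \<open>\<phi>(f * g) = \<phi>(f)\<phi>(g)\<close> for each of the three operations \<open>*\<close>
  of \<open>F\<^sup>(\<^sup>3\<^sup>)\<close>; so the axioms (i) hold already on representatives.
  For (ii), polylinearity and \<open>H \<noteq> {}\<close> give every monomial of \<open>\<Phi>\<close> a marked leaf,
  and induction on the monomial shows that \<open>\<Phi>\<^sub>H(a\<^sub>1, \<dots>, a\<^sub>n)\<close> computed in
  \<open>F\<^sup>(\<^sup>3\<^sup>)\<close> equals \<open>\<Phi>(b\<^sub>1, \<dots>, b\<^sub>n)\<close> computed in the magmatic algebra, where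
  \<open>b\<^sub>i = a\<^sub>i\<close> for \<open>i \<in> H\<close> and \<open>b\<^sub>i = \<phi>(a\<^sub>i)\<close> otherwise: at a node with exactly one
  marked branch the operation \<open>\<turnstile>\<close> or \<open>\<stileturn>\<close> applies \<open>\<phi>\<close> to the unmarked branch.
  Hence \<open>\<Phi>\<^sub>H(a\<^sub>1, \<dots>, a\<^sub>n)\<close> is a value of a defining identity and vanishes in \<open>F\<close>.
\<close>

lemma poly_mapping_induct_single [case_names zero add]:
  assumes "P 0" and "\<And>f k c. P f \<Longrightarrow> P (f + Poly_Mapping.single k c)"
  shows "P f"
proof (induct f rule: Poly_Mapping.update_induct)
  case const
  then show ?case using assms(1) by simp
next
  case (update f k c)
  have "Poly_Mapping.update k c f = f + Poly_Mapping.single k c"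
    by (rule poly_mapping_eqI)
      (use update(1) in \<open>auto simp: lookup_update lookup_add lookup_single
         not_in_keys_iff_lookup_eq_zero when_def\<close>)
  then show ?case using assms(2) update(3) by simp
qed

lemma additive_poly_mapping_eqI:
  fixes L M :: "('a \<Rightarrow>\<^sub>0 'b::comm_monoid_add) \<Rightarrow> 'c::comm_monoid_add"
  assumes "L 0 = M 0"
    and "\<And>p q. L (p + q) = L p + L q" and "\<And>p q. M (p + q) = M p + M q"
    and "\<And>k c. L (Poly_Mapping.single k c) = M (Poly_Mapping.single k c)"
  shows "L p = M p"
  by (induct p rule: poly_mapping_induct_single) (simp_all add: assms)

lemma lookup_msmult: "Poly_Mapping.lookup (msmult c p) k = c * Poly_Mapping.lookup p k"
  by (simp add: msmult_def Poly_Mapping.map.rep_eq when_def)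

lemma msmult_add: "msmult c (p + q) = msmult c p + msmult c q"
  by (rule poly_mapping_eqI) (simp add: lookup_msmult lookup_add algebra_simps)

lemma msmult_add_left: "msmult (a + b) p = msmult a p + msmult b p"
  by (rule poly_mapping_eqI) (simp add: lookup_msmult lookup_add algebra_simps)

lemma msmult_zero_left [simp]: "msmult 0 p = 0"
  and msmult_zero_right [simp]: "msmult c 0 = 0"
  and msmult_one [simp]: "msmult 1 p = p"
  by (simp_all add: poly_mapping_eqI lookup_msmult)

lemma msmult_msmult: "msmult a (msmult b p) = msmult (a * b) p"
  by (rule poly_mapping_eqI) (simp add: lookup_msmult)

lemma msmult_single: "msmult c (Poly_Mapping.single k a) = Poly_Mapping.single k (c * a)"
  by (simp add: msmult_def)

lemma mmul_zero_left [simp]: "mmul 0 q = 0"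
  and mmul_zero_right [simp]: "mmul p 0 = 0"
  by (simp_all add: mmul_def)

lemma mmul_add_left: "mmul (p + q) r = mmul p r + mmul q r"
  unfolding mmul_def
  by (rule setsum_keys_plus_distrib) (simp_all add: distrib_right single_add sum.distrib)

lemma mmul_add_right: "mmul p (q + r) = mmul p q + mmul p r"
  unfolding mmul_def
  by (simp add: setsum_keys_plus_distrib[where f = "\<lambda>t b. Poly_Mapping.single (Node _ t) (_ * b)"]
      distrib_left single_add sum.distrib)

lemma mmul_single:
  "mmul (Poly_Mapping.single s a) (Poly_Mapping.single t b) = Poly_Mapping.single (Node s t) (a * b)"
  by (simp add: mmul_def)

lemma mmul_msmult_left: "mmul (msmult c p) q = msmult c (mmul p q)"
proof (rule additive_poly_mapping_eqI[where L = "\<lambda>p. mmul (msmult c p) q" and M = "\<lambda>p. msmult c (mmul p q)"])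
  fix k a
  show "mmul (msmult c (Poly_Mapping.single k a)) q = msmult c (mmul (Poly_Mapping.single k a) q)"
    by (rule additive_poly_mapping_eqI[where L = "mmul (msmult c (Poly_Mapping.single k a))"
          and M = "\<lambda>q. msmult c (mmul (Poly_Mapping.single k a) q)"])
      (simp_all add: mmul_add_right msmult_add msmult_single mmul_single mult.assoc)
qed (simp_all add: mmul_add_left msmult_add)

lemma mmul_msmult_right: "mmul p (msmult c q) = msmult c (mmul p q)"
proof (rule additive_poly_mapping_eqI[where L = "\<lambda>p. mmul p (msmult c q)" and M = "\<lambda>p. msmult c (mmul p q)"])
  fix k a
  show "mmul (Poly_Mapping.single k a) (msmult c q) = msmult c (mmul (Poly_Mapping.single k a) q)"
    by (rule additive_poly_mapping_eqI[where L = "\<lambda>q. mmul (Poly_Mapping.single k a) (msmult c q)"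
          and M = "\<lambda>q. msmult c (mmul (Poly_Mapping.single k a) q)"])
      (simp_all add: mmul_add_right msmult_add msmult_single mmul_single algebra_simps)
qed (simp_all add: mmul_add_left msmult_add)

lemma eval_mag_zero [simp]: "eval_mag 0 m = 0"
  by (simp add: eval_mag_def)

lemma eval_mag_add: "eval_mag (p + q) m = eval_mag p m + eval_mag q m"
  unfolding eval_mag_def by (rule setsum_keys_plus_distrib) (simp_all add: msmult_add_left)

lemma eval_mag_single: "eval_mag (Poly_Mapping.single t c) m = msmult c (eval_mtree t m)"
  by (simp add: eval_mag_def)

lemma eval_mag_msmult: "eval_mag (msmult c p) m = msmult c (eval_mag p m)"
  by (rule additive_poly_mapping_eqI[where L = "\<lambda>p. eval_mag (msmult c p) m" and M = "\<lambda>p. msmult c (eval_mag p m)"])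
    (simp_all add: eval_mag_add msmult_add msmult_single eval_mag_single msmult_msmult)

lemma eval_mag_mmul: "eval_mag (mmul f g) m = mmul (eval_mag f m) (eval_mag g m)"
proof (rule additive_poly_mapping_eqI[where L = "\<lambda>f. eval_mag (mmul f g) m"
      and M = "\<lambda>f. mmul (eval_mag f m) (eval_mag g m)"])
  fix k a
  show "eval_mag (mmul (Poly_Mapping.single k a) g) m
      = mmul (eval_mag (Poly_Mapping.single k a) m) (eval_mag g m)"
    by (rule additive_poly_mapping_eqI[where L = "\<lambda>g. eval_mag (mmul (Poly_Mapping.single k a) g) m"
          and M = "\<lambda>g. mmul (eval_mag (Poly_Mapping.single k a) m) (eval_mag g m)"])
      (simp_all add: mmul_add_right eval_mag_add mmul_single eval_mag_single
        mmul_msmult_left mmul_msmult_right msmult_msmult mult.commute)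
qed (simp_all add: mmul_add_left eval_mag_add)

lemma eval_mag_eval_mtree: "eval_mag (eval_mtree t m) \<sigma> = eval_mtree t (\<lambda>i. eval_mag (m i) \<sigma>)"
  by (induct t) (simp_all add: eval_mag_mmul)

lemma eval_mtree_cong: "(\<And>i. i \<in> set (leaves t) \<Longrightarrow> m i = m' i) \<Longrightarrow> eval_mtree t m = eval_mtree t m'"
  by (induct t) auto

lemma dephi_mmul: "dephi (mmul f g) = mmul (dephi f) (dephi g)"
  unfolding dephi_def by (rule eval_mag_mmul)

lemma dephi_idem: "dephi (dephi p) = dephi p"
proof (rule additive_poly_mapping_eqI[where L = "\<lambda>p. dephi (dephi p)" and M = dephi])
  fix k c
  show "dephi (dephi (Poly_Mapping.single k c)) = dephi (Poly_Mapping.single k c)"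
    unfolding dephi_def eval_mag_single eval_mag_msmult eval_mag_eval_mtree
    by (simp add: mgen_def eval_mag_single)
qed (simp_all add: dephi_def eval_mag_add)

lemma dephi_F3_op: "dephi (F3_op op f g) = mmul (dephi f) (dephi g)"
  by (cases op) (simp_all add: dephi_mmul dephi_idem)

lemma eval_tri_zero [simp]: "eval_tri opf 0 m = 0"
  by (simp add: eval_tri_def)

lemma eval_tri_add: "eval_tri opf (p + q) m = eval_tri opf p m + eval_tri opf q m"
  unfolding eval_tri_def by (rule setsum_keys_plus_distrib) (simp_all add: msmult_add_left)

lemma eval_tri_sum: "eval_tri opf (sum f A) m = (\<Sum>x\<in>A. eval_tri opf (f x) m)"
  by (induct A rule: infinite_finite_induct) (simp_all add: eval_tri_add)

lemma eval_tri_single: "eval_tri opf (Poly_Mapping.single t c) m = msmult c (eval_ttree opf t m)"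
  by (simp add: eval_tri_def)

definition dephi_unmarked :: "nat set \<Rightarrow> (nat \<Rightarrow> ('k::field, 'x + 'x) mag) \<Rightarrow> nat \<Rightarrow> ('k, 'x + 'x) mag" where
  "dephi_unmarked H m i = (if i \<in> H then m i else dephi (m i))"

lemma marked_Node: "marked H (Node a b) \<longleftrightarrow> marked H a \<or> marked H b"
  by (auto simp: marked_def)

lemma dephi_eval_rep: "dephi (eval_ttree F3_op (rep H t) m) = eval_mtree t (\<lambda>i. dephi (m i))"
  by (induct t) (simp_all add: dephi_F3_op)

lemma eval_rep_unmarked:
  "\<not> marked H t \<Longrightarrow> dephi (eval_ttree F3_op (rep H t) m) = eval_mtree t (dephi_unmarked H m)"
  unfolding dephi_eval_rep
  by (rule eval_mtree_cong) (auto simp: marked_def dephi_unmarked_def)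

lemma eval_rep_marked:
  "marked H t \<Longrightarrow> eval_ttree F3_op (rep H t) m = eval_mtree t (dephi_unmarked H m)"
proof (induct t)
  case (Leaf i)
  then show ?case by (simp add: marked_def dephi_unmarked_def)
next
  case (Node a b)
  then show ?case
    by (cases "marked H a"; cases "marked H b")
      (simp_all add: marked_Node eval_rep_unmarked)
qed

lemma polylinear_marked:
  assumes "polylinear n \<Phi>" and "t \<in> Poly_Mapping.keys \<Phi>" and "H \<noteq> {}" and "H \<subseteq> {1..n}"
  shows "marked H t"
proof -
  have "set (leaves t) = set [1..<n+1]"
    using assms(1,2) unfolding polylinear_def by (metis set_mset_mset)
  then have "set (leaves t) = {1..n}"
    by auto
  then show ?thesis using assms(3,4) unfolding marked_def by blast
qed

lemma eval_tri_replicate_poly: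
  assumes "polylinear n \<Phi>" and "H \<noteq> {}" and "H \<subseteq> {1..n}"
  shows "eval_tri F3_op (replicate_poly H \<Phi>) m = eval_mag \<Phi> (dephi_unmarked H m)"
  unfolding replicate_poly_def eval_tri_sum eval_tri_single eval_mag_def
  using polylinear_marked[OF assms(1) _ assms(2,3)] by (intro sum.cong) (simp_all add: eval_rep_marked)

theorem lemma3p1:
  fixes S :: "(nat \<times> ('k::field, nat) mag) set"
  assumes "\<forall>(n, \<Phi>)\<in>S. polylinear n \<Phi>"
  shows "in_triVar S (free_eq S) (F3_op :: triop \<Rightarrow> ('k, 'x + 'x) mag \<Rightarrow> ('k, 'x + 'x) mag \<Rightarrow> ('k, 'x + 'x) mag)"
proof -
  have axioms_i: "free_eq S (F3_op Rt (F3_op op a b) c) (F3_op Rt (F3_op op' a b) c) \<and>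
      free_eq S (F3_op Lt a (F3_op op b c)) (F3_op Lt a (F3_op op' b c))"
    for op op' and a b c :: "('k, 'x + 'x) mag"
    by (simp add: free_eq_def dephi_F3_op verbal_ideal.zero)
  have axioms_ii: "free_eq S (eval_tri F3_op (replicate_poly H \<Phi>) m) 0"
    if "(n, \<Phi>) \<in> S" and "H \<noteq> {}" and "H \<subseteq> {1..n}" for n \<Phi> H and m :: "nat \<Rightarrow> ('k, 'x + 'x) mag"
  proof -
    have "polylinear n \<Phi>"
      using assms that(1) by auto
    then show ?thesis
      using that by (simp add: free_eq_def eval_tri_replicate_poly verbal_ideal.gen)
  qed
  show ?thesis
    unfolding in_triVar_def using axioms_i axioms_ii by blast
qed

end
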